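(* There exist a finitely generated, residually finite group $G$ and an endomorphism $\Phi : G \to G$ such that for every $n \geq 0$, the restriction of $\Phi$ to $\Phi^n(G)$ is not injective. *)

theory Defs
  imports "HOL-Algebra.Algebra"
begin

definition finitely_generated_group :: "('a, 'b) monoid_scheme \<Rightarrow> bool" where
  "finitely_generated_group G \<longleftrightarrow>
     (\<exists>S. finite S \<and> S \<subseteq> carrier G \<and> generate G S = carrier G)"

definition residually_finite :: "('a, 'b) monoid_scheme \<Rightarrow> bool" where
  "residually_finite G \<longleftrightarrow>
     (\<forall>g \<in> carrier G. g \<noteq> \<one>\<^bsub>G\<^esub> \<longrightarrow>
        (\<exists>N. N \<lhd> G \<and> finite (rcosets\<^bsub>G\<^esub> N) \<and> g \<notin> N))"

end

theory Submission
  imports Defs "HOL-Library.Countable_Set"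
begin

text \<open>
  Let a be an element and e 0, e 1, ... involutions of a group L with a e (k + 1) = e k a,
  such that e 0 commutes with every e k. Reading the lamp configurations of the lamplighter
  group C2 wr L as elements of the group ring F2[L], right multiplication by
  a^-1 + (a e 0)^-1 commutes with the moves of the lighter and so defines an endomorphism
  Phi. It sends f (1 + e (k + 1)) to Phi(f) (1 + e k) and kills f (1 + e 0); hence Phi^(n+1)
  kills the element x n whose lamps are lit exactly at 1 and at e n. In the symmetric group
  on {1..2m}, with a rotating both halves and e k the transposition (k+1, k+1+m), the
  configuration Phi^n (x n) is, up to translation, the sum of all products of subsets of the
  commuting transpositions e 0, ..., e n; for n < m these products are distinct, so it is
  nonzero.

  In the product over all m of these lamplighter groups, the subgroup generated by the
  lighters a, e 0 and the lamp at 1 is therefore finitely generated, residually finite (as a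
  subgroup of a product of finite groups) and mapped into itself by Phi, and Phi^n (x n) is a
  nontrivial element of its n-th image that Phi kills. Being countable, the group has an
  isomorphic copy on the natural numbers.
\<close>

section \<open>Residual finiteness, finite generation and isomorphisms\<close>

lemma residually_finite_if_separating_homs:
  fixes H :: "('a, 'b) monoid_scheme"
  assumes "group H"
    and separating: "\<And>g. g \<in> carrier H \<Longrightarrow> g \<noteq> \<one>\<^bsub>H\<^esub> \<Longrightarrow>
       \<exists>(K :: ('c, 'd) monoid_scheme) \<psi>.
          group K \<and> finite (carrier K) \<and> \<psi> \<in> hom H K \<and> \<psi> g \<noteq> \<one>\<^bsub>K\<^esub>"
  shows "residually_finite H"
  unfolding residually_finite_def
proof (intro ballI impI)
  fix g assume g: "g \<in> carrier H" "g \<noteq> \<one>\<^bsub>H\<^esub>"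
  obtain K :: "('c, 'd) monoid_scheme" and \<psi>
    where K: "group K" "finite (carrier K)" "\<psi> \<in> hom H K" "\<psi> g \<noteq> \<one>\<^bsub>K\<^esub>"
    using separating[OF g] by blast
  interpret group_hom H K \<psi>
    using K \<open>group H\<close> by (simp add: group_hom_def group_hom_axioms_def)
  have "finite (carrier (H Mod kernel H K \<psi>))"
    using finite_imageD[OF finite_subset[OF _ K(2)] FactGroup_inj_on] FactGroup_the_elem_mem
    by blast
  then have "finite (rcosets\<^bsub>H\<^esub> kernel H K \<psi>)"
    by (simp add: FactGroup_def)
  moreover have "g \<notin> kernel H K \<psi>"
    using K(4) by (simp add: kernel_def)
  ultimately show "\<exists>N. N \<lhd> H \<and> finite (rcosets\<^bsub>H\<^esub> N) \<and> g \<notin> N"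
    using normal_kernel by blast
qed

lemma residually_finite_iso:
  assumes "group G" "group H" "\<phi> \<in> iso G H" "residually_finite G"
  shows "residually_finite H"
proof (rule residually_finite_if_separating_homs[OF \<open>group H\<close>])
  fix h assume h: "h \<in> carrier H" "h \<noteq> \<one>\<^bsub>H\<^esub>"
  let ?\<psi> = "inv_into (carrier G) \<phi>"
  have \<psi>: "?\<psi> \<in> iso H G"
    using group.iso_set_sym[OF \<open>group G\<close> \<open>\<phi> \<in> iso G H\<close>] .
  interpret \<psi>: group_hom H G ?\<psi>
    using \<psi> assms by (simp add: group_hom_def group_hom_axioms_def iso_def)
  have "inj_on ?\<psi> (carrier H)"
    using \<psi> by (simp add: iso_def bij_betw_def)
  then have \<psi>h: "?\<psi> h \<in> carrier G" "?\<psi> h \<noteq> \<one>\<^bsub>G\<^esub>"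
    using h \<psi>.hom_one inj_onD[of ?\<psi> "carrier H" h "\<one>\<^bsub>H\<^esub>"] by auto
  then obtain N where N: "N \<lhd> G" "finite (rcosets\<^bsub>G\<^esub> N)" "?\<psi> h \<notin> N"
    using \<open>residually_finite G\<close> unfolding residually_finite_def by blast
  interpret N: normal N G by (fact N(1))
  show "\<exists>(K :: 'a set monoid) \<psi>.
      group K \<and> finite (carrier K) \<and> \<psi> \<in> hom H K \<and> \<psi> h \<noteq> \<one>\<^bsub>K\<^esub>"
  proof (intro exI[of _ "G Mod N"] exI[of _ "\<lambda>x. N #>\<^bsub>G\<^esub> ?\<psi> x"] conjI)
    show "group (G Mod N)" "finite (carrier (G Mod N))"
      using N.factorgroup_is_group N(2) by (simp_all add: FactGroup_def)
    show "(\<lambda>x. N #>\<^bsub>G\<^esub> ?\<psi> x) \<in> hom H (G Mod N)"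
      using hom_compose[OF \<psi>.homh N.r_coset_hom_Mod] by (simp add: comp_def)
    show "N #>\<^bsub>G\<^esub> ?\<psi> h \<noteq> \<one>\<^bsub>G Mod N\<^esub>"
      using N(3) \<psi>h group.coset_join1[OF \<open>group G\<close> _ _ N.subgroup_axioms] by auto
  qed
qed

lemma carrier_subgroup_generated_of_subset:
  "S \<subseteq> carrier G \<Longrightarrow> carrier (subgroup_generated G S) = generate G S"
  by (simp add: carrier_subgroup_generated Int_absorb1)

lemma residually_finite_subgroup_generated_product:
  fixes H :: "'i \<Rightarrow> ('a, 'b) monoid_scheme"
  assumes "\<And>i. i \<in> I \<Longrightarrow> group (H i)" "\<And>i. i \<in> I \<Longrightarrow> finite (carrier (H i))"
  shows "residually_finite (subgroup_generated (product_group I H) S)"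
proof (rule residually_finite_if_separating_homs)
  let ?\<Gamma> = "subgroup_generated (product_group I H) S"
  show "group ?\<Gamma>"
    using assms(1) by (simp add: group.group_subgroup_generated)
  fix g assume g: "g \<in> carrier ?\<Gamma>" "g \<noteq> \<one>\<^bsub>?\<Gamma>\<^esub>"
  have carrier_sub: "carrier ?\<Gamma> \<subseteq> (\<Pi>\<^sub>E i\<in>I. carrier (H i))"
    using group.carrier_subgroup_generated_subset[OF product_group[OF assms(1)]] by simp
  then have "g \<in> (\<Pi>\<^sub>E i\<in>I. carrier (H i))"
    using g(1) by blast
  moreover have "g \<noteq> (\<lambda>i\<in>I. \<one>\<^bsub>H i\<^esub>)"
    using g(2) by (simp add: subgroup_generated_def)
  ultimately obtain i where i: "i \<in> I" "g i \<noteq> \<one>\<^bsub>H i\<^esub>"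
    by (force simp: PiE_iff extensional_def restrict_def)
  have "(\<lambda>x. x i) \<in> hom ?\<Gamma> (H i)"
  proof (rule homI)
    fix x assume "x \<in> carrier ?\<Gamma>"
    then show "x i \<in> carrier (H i)"
      using i(1) carrier_sub by blast
  qed (use i(1) in \<open>simp add: subgroup_generated_def\<close>)
  then show "\<exists>(K :: ('a, 'b) monoid_scheme) \<psi>.
      group K \<and> finite (carrier K) \<and> \<psi> \<in> hom ?\<Gamma> K \<and> \<psi> g \<noteq> \<one>\<^bsub>K\<^esub>"
  proof (intro exI[of _ "H i"] exI[of _ "\<lambda>x. x i"] conjI)
    show "group (H i)" "finite (carrier (H i))"
      using assms i(1) by blast+
  qed (use i(2) in simp_all)
qed

lemma finitely_generated_group_iso:
  assumes "group G" "group H" "\<phi> \<in> iso G H" "finitely_generated_group G"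
  shows "finitely_generated_group H"
proof -
  obtain S where S: "finite S" "S \<subseteq> carrier G" "generate G S = carrier G"
    using assms(4) by (auto simp: finitely_generated_group_def)
  have "group_hom G H \<phi>"
    using assms(1-3) by (simp add: group_hom_def group_hom_axioms_def iso_def)
  then have "generate H (\<phi> ` S) = \<phi> ` carrier G"
    using group_hom.generate_img[OF _ S(2)] S(3) by metis
  also have "\<dots> = carrier H"
    using assms(3) by (simp add: iso_def bij_betw_def)
  finally have "generate H (\<phi> ` S) = carrier H" .
  moreover have "\<phi> ` S \<subseteq> carrier H"
    using S(2) assms(3) by (auto simp: iso_def hom_def)
  ultimately show ?thesis
    unfolding finitely_generated_group_def using S(1) by blast
qed

lemma (in group) finitely_generated_subgroup_generated:
  assumes "finite S" "S \<subseteq> carrier G"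
  shows "finitely_generated_group (subgroup_generated G S)"
proof -
  have carrier_eq: "carrier (subgroup_generated G S) = generate G S"
    using assms(2) by (rule carrier_subgroup_generated_of_subset)
  have "S \<subseteq> generate G S"
    by (auto intro: generate.incl)
  then have "generate (G\<lparr>carrier := generate G S\<rparr>) S = generate G S"
    by (rule generate_consistent[OF _ generate_is_subgroup[OF assms(2)]])
  then have "generate (subgroup_generated G S) S = carrier (subgroup_generated G S)"
    using carrier_eq by (simp add: subgroup_generated_def)
  moreover have "S \<subseteq> carrier (subgroup_generated G S)"
    using subgroup_generated_subset_carrier_subset[OF assms(2)] .
  ultimately show ?thesis
    unfolding finitely_generated_group_def using assms(1) by blast
qed

lemma (in group) hom_subgroup_generated:
  assumes "\<Phi> \<in> hom G G" "S \<subseteq> carrier G" "\<Phi> ` S \<subseteq> generate G S"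
  shows "\<Phi> \<in> hom (subgroup_generated G S) (subgroup_generated G S)"
proof -
  interpret group_hom G G \<Phi>
    using assms(1) by (simp add: group_hom_def group_hom_axioms_def)
  have "\<Phi> ` generate G S = generate G (\<Phi> ` S)"
    using generate_img[OF assms(2)] by simp
  also have "\<dots> \<subseteq> generate G S"
    using generate_subgroup_incl[OF assms(3) generate_is_subgroup[OF assms(2)]] .
  finally have "\<Phi> ` generate G S \<subseteq> generate G S" .
  moreover have carrier_eq: "carrier (subgroup_generated G S) = generate G S"
    using assms(2) by (rule carrier_subgroup_generated_of_subset)
  ultimately show ?thesis
  proof (intro homI)
    fix x y assume "x \<in> carrier (subgroup_generated G S)" "y \<in> carrier (subgroup_generated G S)"
    then show "\<Phi> (x \<otimes>\<^bsub>subgroup_generated G S\<^esub> y) =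
        \<Phi> x \<otimes>\<^bsub>subgroup_generated G S\<^esub> \<Phi> y"
      using generate_in_carrier[OF assms(2)] carrier_eq by (auto simp: subgroup_generated_def)
  qed (auto simp: carrier_eq)
qed

section \<open>Countable groups\<close>

lemma (in monoid) foldr_mult_closed:
  "set xs \<subseteq> carrier G \<Longrightarrow> foldr (monoid.mult G) xs \<one> \<in> carrier G"
  by (induction xs) auto

lemma (in monoid) foldr_mult_append:
  assumes "set xs \<subseteq> carrier G" "set ys \<subseteq> carrier G"
  shows "foldr (monoid.mult G) (xs @ ys) \<one> = foldr (monoid.mult G) xs \<one> \<otimes> foldr (monoid.mult G) ys \<one>"
  using assms
proof (induction xs)
  case Nil
  then show ?case by (simp add: foldr_mult_closed)
next
  case (Cons x xs)
  then show ?case by (simp add: foldr_mult_closed m_assoc)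
qed

lemma (in group) countable_generate:
  assumes "S \<subseteq> carrier G" "countable S"
  shows "countable (generate G S)"
proof -
  let ?letters = "S \<union> m_inv G ` S"
  have "generate G S \<subseteq> (\<lambda>xs. foldr (monoid.mult G) xs \<one>) ` lists ?letters"
  proof
    fix x assume "x \<in> generate G S"
    then show "x \<in> (\<lambda>xs. foldr (monoid.mult G) xs \<one>) ` lists ?letters"
    proof (induction rule: generate.induct)
      case one
      show ?case by (rule image_eqI[of _ _ "[]"]) auto
    next
      case (incl h)
      then show ?case using assms(1) by (intro image_eqI[of _ _ "[h]"]) auto
    next
      case (inv h)
      then show ?case using assms(1) by (intro image_eqI[of _ _ "[inv h]"]) auto
    next
      case (eng h1 h2)
      then obtain xs ys where "xs \<in> lists ?letters" "ys \<in> lists ?letters"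
        and "h1 = foldr (monoid.mult G) xs \<one>" "h2 = foldr (monoid.mult G) ys \<one>"
        by auto
      moreover have "?letters \<subseteq> carrier G"
        using assms(1) by auto
      ultimately have "h1 \<otimes> h2 = foldr (monoid.mult G) (xs @ ys) \<one>"
        by (metis foldr_mult_append in_listsD subset_iff)
      then show ?case
        using \<open>xs \<in> lists ?letters\<close> \<open>ys \<in> lists ?letters\<close>
        by (intro image_eqI[of _ _ "xs @ ys"]) auto
    qed
  qed
  moreover have "countable (lists ?letters)"
    using assms(2) by auto
  ultimately show ?thesis
    by (meson countable_image countable_subset)
qed

definition transport_group :: "('a \<Rightarrow> 'c) \<Rightarrow> ('a, 'b) monoid_scheme \<Rightarrow> 'c monoid" where
  "transport_group f G =
     \<lparr>carrier = f ` carrier G,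
      monoid.mult = \<lambda>x y. f (inv_into (carrier G) f x \<otimes>\<^bsub>G\<^esub> inv_into (carrier G) f y),
      one = f \<one>\<^bsub>G\<^esub>\<rparr>"

lemma transport_group_iso:
  assumes "inj_on f (carrier G)"
  shows "f \<in> iso G (transport_group f G)"
proof -
  have "f \<in> hom G (transport_group f G)"
    by (rule homI) (simp_all add: transport_group_def assms)
  then show ?thesis
    using assms by (simp add: iso_def bij_betw_def transport_group_def)
qed

lemma group_transport_group:
  assumes "group G" "inj_on f (carrier G)"
  shows "group (transport_group f G)"
proof -
  have "f \<in> hom G (transport_group f G)"
    using transport_group_iso[OF assms(2)] by (simp add: iso_def)
  from group.hom_imp_img_group[OF assms(1) this] show ?thesis
    by (simp add: transport_group_def)
qed

lemma countable_group_iso_nat: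
  assumes "group H" "countable (carrier H)"
  obtains G :: "nat monoid" and \<phi> where "group G" "\<phi> \<in> iso H G"
proof
  have "inj_on (to_nat_on (carrier H)) (carrier H)"
    using assms(2) by (rule inj_on_to_nat_on)
  then show "group (transport_group (to_nat_on (carrier H)) H)"
    and "to_nat_on (carrier H) \<in> iso H (transport_group (to_nat_on (carrier H)) H)"
    by (simp_all add: group_transport_group[OF assms(1)] transport_group_iso)
qed

lemma funpow_conjugate_iso:
  assumes "\<phi> \<in> iso G H" "\<Phi> \<in> hom G G" "x \<in> carrier G"
  shows "((\<phi> \<circ> \<Phi> \<circ> inv_into (carrier G) \<phi>) ^^ n) (\<phi> x) = \<phi> ((\<Phi> ^^ n) x)"
proof (induction n)
  case 0
  show ?case by simp
next
  case (Suc n)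
  have "(\<Phi> ^^ n) x \<in> carrier G"
    using assms(2,3) by (induction n) (auto simp: hom_def)
  moreover have "inj_on \<phi> (carrier G)"
    using assms(1) by (simp add: iso_def bij_betw_def)
  ultimately show ?case
    using Suc by simp
qed

lemma (in group) not_inj_on_funpow_image:
  assumes "\<Phi> \<in> hom G G" "x \<in> carrier G" "(\<Phi> ^^ n) x \<noteq> \<one>" "(\<Phi> ^^ Suc n) x = \<one>"
  shows "\<not> inj_on \<Phi> ((\<Phi> ^^ n) ` carrier G)"
proof
  assume inj: "inj_on \<Phi> ((\<Phi> ^^ n) ` carrier G)"
  interpret group_hom G G \<Phi>
    using assms(1) by (simp add: group_hom_def group_hom_axioms_def)
  have one: "(\<Phi> ^^ k) \<one> = \<one>" for k
    by (induction k) auto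
  have "\<Phi> ((\<Phi> ^^ n) x) = \<Phi> ((\<Phi> ^^ n) \<one>)"
    using assms(4) one by simp
  then have "(\<Phi> ^^ n) x = (\<Phi> ^^ n) \<one>"
    using inj assms(2) by (auto dest: inj_onD)
  with assms(3) one show False
    by simp
qed

lemma conjugate_hom_iso:
  assumes "group H" "\<phi> \<in> iso H G" "\<Phi> \<in> hom H H"
  shows "\<phi> \<circ> \<Phi> \<circ> inv_into (carrier H) \<phi> \<in> hom G G"
proof -
  have "inv_into (carrier H) \<phi> \<in> hom G H"
    using group.iso_set_sym[OF assms(1,2)] by (simp add: iso_def)
  then have "\<phi> \<circ> (\<Phi> \<circ> inv_into (carrier H) \<phi>) \<in> hom G G"
    using assms(2,3) by (intro hom_compose) (auto simp: iso_def)
  then show ?thesis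
    by (simp add: comp_assoc)
qed

lemma not_inj_on_funpow_image_conjugate:
  assumes "group H" "group G" "\<phi> \<in> iso H G" "\<Phi> \<in> hom H H" "x \<in> carrier H"
    and "(\<Phi> ^^ n) x \<noteq> \<one>\<^bsub>H\<^esub>" "(\<Phi> ^^ Suc n) x = \<one>\<^bsub>H\<^esub>"
  shows "\<not> inj_on (\<phi> \<circ> \<Phi> \<circ> inv_into (carrier H) \<phi>)
             (((\<phi> \<circ> \<Phi> \<circ> inv_into (carrier H) \<phi>) ^^ n) ` carrier G)"
proof (rule group.not_inj_on_funpow_image[OF assms(2)])
  interpret group_hom H G \<phi>
    using assms(1-3) by (simp add: group_hom_def group_hom_axioms_def iso_def)
  have inj: "inj_on \<phi> (carrier H)"
    using assms(3) by (simp add: iso_def bij_betw_def)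
  have closed: "(\<Phi> ^^ k) x \<in> carrier H" for k
    using assms(4,5) by (induction k) (auto simp: hom_def)
  show "\<phi> \<circ> \<Phi> \<circ> inv_into (carrier H) \<phi> \<in> hom G G"
    by (rule conjugate_hom_iso[OF assms(1,3,4)])
  show "\<phi> x \<in> carrier G"
    using assms(5) by simp
  show "((\<phi> \<circ> \<Phi> \<circ> inv_into (carrier H) \<phi>) ^^ n) (\<phi> x) \<noteq> \<one>\<^bsub>G\<^esub>"
    using funpow_conjugate_iso[OF assms(3,4,5)] assms(6) closed inj_onD[OF inj, of _ "\<one>\<^bsub>H\<^esub>"]
    by fastforce
  show "((\<phi> \<circ> \<Phi> \<circ> inv_into (carrier H) \<phi>) ^^ Suc n) (\<phi> x) = \<one>\<^bsub>G\<^esub>"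
    using funpow_conjugate_iso[OF assms(3,4,5), of "Suc n"] assms(7) by (simp del: funpow.simps)
qed

section \<open>Lamplighter groups\<close>

text \<open>
  The unrestricted wreath product C2 wr L: in (f, g), f is the set of lit lamps (a subset of
  carrier L, as a predicate) and g the position of the lighter; the product lights the lamps
  of f and of the translate g f' with exclusive or.
\<close>

definition lamplighter :: "('a, 'b) monoid_scheme \<Rightarrow> (('a \<Rightarrow> bool) \<times> 'a) monoid" where
  "lamplighter L =
     \<lparr>carrier = {(f, g). g \<in> carrier L \<and> (\<forall>h. f h \<longrightarrow> h \<in> carrier L)},
      monoid.mult = \<lambda>(f, g) (f', g').
        (\<lambda>h. h \<in> carrier L \<and> f h \<noteq> f' (inv\<^bsub>L\<^esub> g \<otimes>\<^bsub>L\<^esub> h), g \<otimes>\<^bsub>L\<^esub> g'),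
      one = (\<lambda>h. False, \<one>\<^bsub>L\<^esub>)\<rparr>"

abbreviation lighter :: "'a \<Rightarrow> ('a \<Rightarrow> bool) \<times> 'a" where
  "lighter g \<equiv> (\<lambda>h. False, g)"

lemma lamplighter_carrier_iff:
  "(f, g) \<in> carrier (lamplighter L) \<longleftrightarrow> g \<in> carrier L \<and> (\<forall>h. f h \<longrightarrow> h \<in> carrier L)"
  by (simp add: lamplighter_def)

lemma lamplighter_mult:
  "(f, g) \<otimes>\<^bsub>lamplighter L\<^esub> (f', g') =
     (\<lambda>h. h \<in> carrier L \<and> f h \<noteq> f' (inv\<^bsub>L\<^esub> g \<otimes>\<^bsub>L\<^esub> h), g \<otimes>\<^bsub>L\<^esub> g')"
  by (simp add: lamplighter_def)

lemma lamplighter_one: "\<one>\<^bsub>lamplighter L\<^esub> = lighter \<one>\<^bsub>L\<^esub>"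
  by (simp add: lamplighter_def)

lemmas lamplighter_simps = lamplighter_carrier_iff lamplighter_mult lamplighter_one

lemma (in group) group_lamplighter: "group (lamplighter G)"
proof (rule groupI)
  fix x y assume "x \<in> carrier (lamplighter G)" "y \<in> carrier (lamplighter G)"
  then show "x \<otimes>\<^bsub>lamplighter G\<^esub> y \<in> carrier (lamplighter G)"
    by (cases x, cases y) (auto simp: lamplighter_simps)
next
  show "\<one>\<^bsub>lamplighter G\<^esub> \<in> carrier (lamplighter G)"
    by (simp add: lamplighter_simps)
next
  fix x y z
  assume "x \<in> carrier (lamplighter G)" "y \<in> carrier (lamplighter G)" "z \<in> carrier (lamplighter G)"
  then show "x \<otimes>\<^bsub>lamplighter G\<^esub> y \<otimes>\<^bsub>lamplighter G\<^esub> z =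
      x \<otimes>\<^bsub>lamplighter G\<^esub> (y \<otimes>\<^bsub>lamplighter G\<^esub> z)"
    by (cases x, cases y, cases z) (auto simp: lamplighter_simps m_assoc inv_mult_group fun_eq_iff)
next
  fix x assume "x \<in> carrier (lamplighter G)"
  then show "\<one>\<^bsub>lamplighter G\<^esub> \<otimes>\<^bsub>lamplighter G\<^esub> x = x"
    by (cases x) (auto simp: lamplighter_simps fun_eq_iff)
next
  fix x assume x: "x \<in> carrier (lamplighter G)"
  obtain f g where x_eq: "x = (f, g)"
    by (cases x)
  show "\<exists>y\<in>carrier (lamplighter G). y \<otimes>\<^bsub>lamplighter G\<^esub> x = \<one>\<^bsub>lamplighter G\<^esub>"
  proof (rule bexI)
    show "(\<lambda>h. h \<in> carrier G \<and> f (g \<otimes> h), inv g) \<otimes>\<^bsub>lamplighter G\<^esub> x =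
        \<one>\<^bsub>lamplighter G\<^esub>"
      using x by (auto simp: x_eq lamplighter_simps fun_eq_iff m_assoc[symmetric])
  qed (use x in \<open>auto simp: x_eq lamplighter_simps\<close>)
qed

lemma finite_lamplighter:
  assumes "finite (carrier L)"
  shows "finite (carrier (lamplighter L))"
proof -
  have "carrier (lamplighter L) \<subseteq> (\<lambda>A h. h \<in> A) ` Pow (carrier L) \<times> carrier L"
  proof
    fix x assume "x \<in> carrier (lamplighter L)"
    then obtain f g where "x = (f, g)" "g \<in> carrier L" "\<forall>h. f h \<longrightarrow> h \<in> carrier L"
      by (cases x) (auto simp: lamplighter_simps)
    then show "x \<in> (\<lambda>A h. h \<in> A) ` Pow (carrier L) \<times> carrier L"
      by (auto intro!: image_eqI[of _ _ "Collect f"])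
  qed
  then show ?thesis
    using assms by (meson finite_Pow_iff finite_SigmaI finite_imageI finite_subset)
qed

lemma (in group) inv_lamplighter_lighter:
  "g \<in> carrier G \<Longrightarrow> inv\<^bsub>lamplighter G\<^esub> lighter g = lighter (inv g)"
  by (rule group.inv_equality[OF group_lamplighter]) (auto simp: lamplighter_simps)

lemma (in group) lamplighter_conj_lamps:
  "g \<in> carrier G \<Longrightarrow>
   lighter (inv g) \<otimes>\<^bsub>lamplighter G\<^esub> (f, \<one>) \<otimes>\<^bsub>lamplighter G\<^esub> lighter g =
     (\<lambda>h. h \<in> carrier G \<and> f (g \<otimes> h), \<one>)"
  by (auto simp: lamplighter_mult fun_eq_iff)

lemma (in group) lamplighter_mult_lamps:
  "(f, \<one>) \<otimes>\<^bsub>lamplighter G\<^esub> (f', \<one>) = (\<lambda>h. h \<in> carrier G \<and> f h \<noteq> f' h, \<one>)"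
  by (auto simp: lamplighter_mult fun_eq_iff)

text \<open>
  Identifying a configuration f with the sum of its lit lamps in F2[L], lamp_map L a d f is
  f (a^-1 + (a d)^-1) and lamp_diff L d f is f (1 + d^-1). Right multiplications commute
  with the left translations by the lighter, so lamplighter_map is an endomorphism.
\<close>

definition lamp_map :: "('a, 'b) monoid_scheme \<Rightarrow> 'a \<Rightarrow> 'a \<Rightarrow> ('a \<Rightarrow> bool) \<Rightarrow> 'a \<Rightarrow> bool" where
  "lamp_map L a d f = (\<lambda>h. h \<in> carrier L \<and> f (h \<otimes>\<^bsub>L\<^esub> a) \<noteq> f (h \<otimes>\<^bsub>L\<^esub> a \<otimes>\<^bsub>L\<^esub> d))"

definition lamp_diff :: "('a, 'b) monoid_scheme \<Rightarrow> 'a \<Rightarrow> ('a \<Rightarrow> bool) \<Rightarrow> 'a \<Rightarrow> bool" where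
  "lamp_diff L d f = (\<lambda>h. h \<in> carrier L \<and> f h \<noteq> f (h \<otimes>\<^bsub>L\<^esub> d))"

definition lamplighter_map ::
    "('a, 'b) monoid_scheme \<Rightarrow> 'a \<Rightarrow> 'a \<Rightarrow> ('a \<Rightarrow> bool) \<times> 'a \<Rightarrow> ('a \<Rightarrow> bool) \<times> 'a" where
  "lamplighter_map L a d = (\<lambda>(f, g). (lamp_map L a d f, g))"

lemma (in group) lamplighter_map_hom:
  assumes "a \<in> carrier G" "d \<in> carrier G"
  shows "lamplighter_map G a d \<in> hom (lamplighter G) (lamplighter G)"
proof (rule homI)
  fix x assume "x \<in> carrier (lamplighter G)"
  then show "lamplighter_map G a d x \<in> carrier (lamplighter G)"
    by (cases x) (auto simp: lamplighter_simps lamplighter_map_def lamp_map_def)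
next
  fix x y assume "x \<in> carrier (lamplighter G)" "y \<in> carrier (lamplighter G)"
  then show "lamplighter_map G a d (x \<otimes>\<^bsub>lamplighter G\<^esub> y) =
      lamplighter_map G a d x \<otimes>\<^bsub>lamplighter G\<^esub> lamplighter_map G a d y"
    using assms
    by (cases x, cases y) (auto simp: lamplighter_simps lamplighter_map_def lamp_map_def fun_eq_iff m_assoc)
qed

lemma funpow_lamplighter_map:
  "(lamplighter_map L a d ^^ n) (f, g) = ((lamp_map L a d ^^ n) f, g)"
  by (induction n) (auto simp: lamplighter_map_def)

section \<open>Involution ladders\<close>

locale involution_ladder = group G for G (structure) +
  fixes a :: 'a and e :: "nat \<Rightarrow> 'a"
  assumes a_closed [simp]: "a \<in> carrier G"
    and e_closed [simp]: "e k \<in> carrier G"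
    and a_e_Suc: "a \<otimes> e (Suc k) = e k \<otimes> a"
    and e_involution: "e k \<otimes> e k = \<one>"
    and e_0_commute: "e 0 \<otimes> e k = e k \<otimes> e 0"
begin

abbreviation ladder_map :: "('a \<Rightarrow> bool) \<Rightarrow> 'a \<Rightarrow> bool" where
  "ladder_map \<equiv> lamp_map G a (e 0)"

lemma inv_e: "inv (e k) = e k"
  using e_involution by (simp add: inv_char)

lemma e_Suc_conj: "e (Suc k) = inv a \<otimes> e k \<otimes> a"
  by (simp add: m_assoc a_e_Suc[symmetric] m_assoc[symmetric])

lemma e_0_pow: "e 0 \<otimes> a [^] n = a [^] n \<otimes> e n"
proof (induction n)
  case 0
  show ?case by simp
next
  case (Suc n)
  have "e 0 \<otimes> a [^] Suc n = (e 0 \<otimes> a [^] n) \<otimes> a"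
    by (simp add: m_assoc)
  also have "\<dots> = a [^] n \<otimes> (a \<otimes> e (Suc n))"
    by (simp add: Suc m_assoc a_e_Suc)
  also have "\<dots> = a [^] Suc n \<otimes> e (Suc n)"
    by (simp add: m_assoc)
  finally show ?case .
qed

lemma ladder_map_lamp_diff_Suc:
  "ladder_map (lamp_diff G (e (Suc k)) f) = lamp_diff G (e k) (ladder_map f)"
proof
  fix h
  show "ladder_map (lamp_diff G (e (Suc k)) f) h = lamp_diff G (e k) (ladder_map f) h"
  proof (cases "h \<in> carrier G")
    case False
    then show ?thesis by (simp add: lamp_map_def lamp_diff_def)
  next
    case True
    have "h \<otimes> e k \<otimes> a = h \<otimes> a \<otimes> e (Suc k)"
      using True by (simp add: m_assoc a_e_Suc)
    moreover have "h \<otimes> a \<otimes> e (Suc k) \<otimes> e 0 = h \<otimes> a \<otimes> e 0 \<otimes> e (Suc k)"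
      using True by (simp add: m_assoc e_0_commute)
    ultimately show ?thesis
      using True by (simp add: lamp_map_def lamp_diff_def) argo
  qed
qed

lemma ladder_map_lamp_diff_0: "ladder_map (lamp_diff G (e 0) f) = (\<lambda>h. False)"
proof
  fix h
  have "h \<in> carrier G \<Longrightarrow> h \<otimes> a \<otimes> e 0 \<otimes> e 0 = h \<otimes> a"
    by (simp add: m_assoc e_involution)
  then show "ladder_map (lamp_diff G (e 0) f) h = False"
    by (auto simp: lamp_map_def lamp_diff_def)
qed

lemma funpow_ladder_map_lamp_diff:
  "(ladder_map ^^ n) (lamp_diff G (e (k + n)) f) = lamp_diff G (e k) ((ladder_map ^^ n) f)"
proof (induction n arbitrary: f)
  case 0
  show ?case by simp
next
  case (Suc n)
  have "(ladder_map ^^ Suc n) (lamp_diff G (e (k + Suc n)) f) =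
      (ladder_map ^^ n) (ladder_map (lamp_diff G (e (Suc (k + n))) f))"
    by (simp add: funpow_Suc_right del: funpow.simps)
  also have "\<dots> = lamp_diff G (e k) ((ladder_map ^^ Suc n) f)"
    by (simp add: ladder_map_lamp_diff_Suc Suc funpow_Suc_right del: funpow.simps)
  finally show ?case .
qed

lemma funpow_ladder_map_lamp_diff_vanishes:
  "(ladder_map ^^ Suc n) (lamp_diff G (e n) f) = (\<lambda>h. False)"
  using funpow_ladder_map_lamp_diff[of n 0 f] by (simp add: ladder_map_lamp_diff_0)

lemma ladder_map_translate_pow:
  "ladder_map (\<lambda>h. h \<in> carrier G \<and> Q (h \<otimes> a [^] k)) =
     (\<lambda>h. h \<in> carrier G \<and> Q (h \<otimes> a [^] Suc k) \<noteq> Q (h \<otimes> a [^] Suc k \<otimes> e k))"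
proof
  fix h
  show "ladder_map (\<lambda>h. h \<in> carrier G \<and> Q (h \<otimes> a [^] k)) h =
      (h \<in> carrier G \<and> Q (h \<otimes> a [^] Suc k) \<noteq> Q (h \<otimes> a [^] Suc k \<otimes> e k))"
  proof (cases "h \<in> carrier G")
    case True
    have "a \<otimes> a [^] k = a [^] Suc k"
      by (rule nat_pow_Suc2[symmetric]) simp
    then have shift: "h \<otimes> a \<otimes> a [^] k = h \<otimes> a [^] Suc k"
      using True by (simp add: m_assoc del: nat_pow_Suc)
    have "h \<otimes> a \<otimes> e 0 \<otimes> a [^] k = h \<otimes> a \<otimes> a [^] k \<otimes> e k"
      using True by (simp add: m_assoc e_0_pow del: nat_pow_Suc)
    then have "h \<otimes> a \<otimes> e 0 \<otimes> a [^] k = h \<otimes> a [^] Suc k \<otimes> e k"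
      by (simp only: shift)
    with shift show ?thesis
      using True by (simp add: lamp_map_def del: nat_pow_Suc)
  qed (simp add: lamp_map_def)
qed

abbreviation lamp_one :: "('a \<Rightarrow> bool) \<times> 'a" where
  "lamp_one \<equiv> (\<lambda>h. h = \<one>, \<one>)"

lemma lamplighter_lamp_diff:
  "lamp_one \<otimes>\<^bsub>lamplighter G\<^esub>
     (lighter (e n) \<otimes>\<^bsub>lamplighter G\<^esub> lamp_one \<otimes>\<^bsub>lamplighter G\<^esub> lighter (e n)) =
   (lamp_diff G (e n) (\<lambda>h. h = \<one>), \<one>)"
proof -
  have "lighter (e n) \<otimes>\<^bsub>lamplighter G\<^esub> lamp_one \<otimes>\<^bsub>lamplighter G\<^esub> lighter (e n) =
      (\<lambda>h. h \<in> carrier G \<and> e n \<otimes> h = \<one>, \<one>)"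
    using lamplighter_conj_lamps[of "e n" "\<lambda>h. h = \<one>"] by (simp add: inv_e)
  moreover have "e n \<otimes> h = \<one> \<longleftrightarrow> h \<otimes> e n = \<one>" if "h \<in> carrier G" for h
    using that inv_comm by auto
  ultimately show ?thesis
    by (auto simp: lamplighter_mult_lamps lamp_diff_def fun_eq_iff)
qed

lemma lamplighter_map_lamp_one:
  "lamplighter_map G a (e 0) lamp_one =
     (lighter (inv a) \<otimes>\<^bsub>lamplighter G\<^esub> lamp_one \<otimes>\<^bsub>lamplighter G\<^esub> lighter a) \<otimes>\<^bsub>lamplighter G\<^esub>
     (lighter (inv (a \<otimes> e 0)) \<otimes>\<^bsub>lamplighter G\<^esub> lamp_one \<otimes>\<^bsub>lamplighter G\<^esub> lighter (a \<otimes> e 0))"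
proof -
  have "h \<otimes> a = \<one> \<longleftrightarrow> a \<otimes> h = \<one>" "h \<otimes> a \<otimes> e 0 = \<one> \<longleftrightarrow> a \<otimes> e 0 \<otimes> h = \<one>"
    if "h \<in> carrier G" for h
    using that inv_comm[of h "a \<otimes> e 0"] inv_comm[of h a] inv_comm[of a h] inv_comm[of "a \<otimes> e 0" h]
    by (auto simp: m_assoc)
  then show ?thesis
    by (simp add: lamplighter_conj_lamps lamplighter_mult_lamps lamplighter_map_def lamp_map_def fun_eq_iff)
      blast
qed

end

section \<open>Products of involution ladders\<close>

locale ladder_family =
  fixes G :: "nat \<Rightarrow> ('a, 'b) monoid_scheme"
    and a :: "nat \<Rightarrow> 'a"
    and e :: "nat \<Rightarrow> nat \<Rightarrow> 'a"
  assumes ladder: "involution_ladder (G m) (a m) (e m)"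
    and finite_carrier: "finite (carrier (G m))"
    and unbounded_depth: "\<exists>m. (lamp_map (G m) (a m) (e m 0) ^^ n)
                              (lamp_diff (G m) (e m n) (\<lambda>h. h = \<one>\<^bsub>G m\<^esub>)) \<noteq> (\<lambda>h. False)"
begin

abbreviation lamplighters :: "(nat \<Rightarrow> ('a \<Rightarrow> bool) \<times> 'a) monoid" where
  "lamplighters \<equiv> product_group UNIV (\<lambda>m. lamplighter (G m))"

abbreviation lamplighters_mult (infixl "\<cdot>" 70) where
  "p \<cdot> q \<equiv> p \<otimes>\<^bsub>lamplighters\<^esub> q"

definition lighter_a :: "nat \<Rightarrow> ('a \<Rightarrow> bool) \<times> 'a" where
  "lighter_a = (\<lambda>m. lighter (a m))"

definition lighter_e :: "nat \<Rightarrow> nat \<Rightarrow> ('a \<Rightarrow> bool) \<times> 'a" where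
  "lighter_e k = (\<lambda>m. lighter (e m k))"

definition lamp_ones :: "nat \<Rightarrow> ('a \<Rightarrow> bool) \<times> 'a" where
  "lamp_ones = (\<lambda>m. (\<lambda>h. h = \<one>\<^bsub>G m\<^esub>, \<one>\<^bsub>G m\<^esub>))"

definition ladder_generators :: "(nat \<Rightarrow> ('a \<Rightarrow> bool) \<times> 'a) set" where
  "ladder_generators = {lighter_a, lighter_e 0, lamp_ones}"

definition ladder_group :: "(nat \<Rightarrow> ('a \<Rightarrow> bool) \<times> 'a) monoid" where
  "ladder_group = subgroup_generated lamplighters ladder_generators"

definition ladder_endo :: "(nat \<Rightarrow> ('a \<Rightarrow> bool) \<times> 'a) \<Rightarrow> nat \<Rightarrow> ('a \<Rightarrow> bool) \<times> 'a" where
  "ladder_endo p = (\<lambda>m. lamplighter_map (G m) (a m) (e m 0) (p m))"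

definition kernel_witness :: "nat \<Rightarrow> nat \<Rightarrow> ('a \<Rightarrow> bool) \<times> 'a" where
  "kernel_witness n = lamp_ones \<cdot> (lighter_e n \<cdot> lamp_ones \<cdot> lighter_e n)"

lemma group_G: "group (G m)"
  using ladder by (simp add: involution_ladder_def)

lemma a_closed: "a m \<in> carrier (G m)"
  by (rule involution_ladder.a_closed[OF ladder])

lemma e_closed: "e m k \<in> carrier (G m)"
  by (rule involution_ladder.e_closed[OF ladder])

lemma group_lamplighters: "group lamplighters"
  by (simp add: group.group_lamplighter[OF group_G])

lemma carrier_lamplighters_iff:
  "p \<in> carrier lamplighters \<longleftrightarrow> (\<forall>m. p m \<in> carrier (lamplighter (G m)))"
  by (simp add: PiE_iff)

lemma mult_lamplighters_apply: "(p \<cdot> q) m = p m \<otimes>\<^bsub>lamplighter (G m)\<^esub> q m"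
  by simp

lemma inv_lamplighters_apply:
  "p \<in> carrier lamplighters \<Longrightarrow> (inv\<^bsub>lamplighters\<^esub> p) m = inv\<^bsub>lamplighter (G m)\<^esub> (p m)"
  by (simp add: group.group_lamplighter[OF group_G])

lemma ladder_generators_closed: "ladder_generators \<subseteq> carrier lamplighters"
  using a_closed e_closed group_G
  by (simp add: ladder_generators_def carrier_lamplighters_iff lighter_a_def lighter_e_def lamp_ones_def
      lamplighter_carrier_iff group.is_monoid del: carrier_product_group)

lemma carrier_ladder_group: "carrier ladder_group = generate lamplighters ladder_generators"
  unfolding ladder_group_def
  by (rule carrier_subgroup_generated_of_subset[OF ladder_generators_closed])

lemma subgroup_ladder_group: "subgroup (carrier ladder_group) lamplighters"
  unfolding carrier_ladder_group
  by (rule group.generate_is_subgroup[OF group_lamplighters ladder_generators_closed])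

lemma ladder_generators_in_ladder_group: "ladder_generators \<subseteq> carrier ladder_group"
  by (auto simp: carrier_ladder_group intro: generate.incl)

lemma lighter_e_Suc: "lighter_e (Suc k) = inv\<^bsub>lamplighters\<^esub> lighter_a \<cdot> lighter_e k \<cdot> lighter_a"
proof
  fix m
  interpret involution_ladder "G m" "a m" "e m"
    by (rule ladder)
  have "lighter_a \<in> carrier lamplighters"
    using ladder_generators_closed by (simp add: ladder_generators_def)
  then show "lighter_e (Suc k) m = (inv\<^bsub>lamplighters\<^esub> lighter_a \<cdot> lighter_e k \<cdot> lighter_a) m"
    by (simp only: mult_lamplighters_apply inv_lamplighters_apply)
      (simp add: lighter_a_def lighter_e_def inv_lamplighter_lighter lamplighter_mult e_Suc_conj
        del: inv_product_group)
qed

lemma lighter_e_in_ladder_group: "lighter_e k \<in> carrier ladder_group"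
proof (induction k)
  case 0
  show ?case
    using ladder_generators_in_ladder_group by (simp add: ladder_generators_def)
next
  case (Suc k)
  then show ?case
    using ladder_generators_in_ladder_group unfolding lighter_e_Suc
    by (intro subgroup.m_closed[OF subgroup_ladder_group] subgroup.m_inv_closed[OF subgroup_ladder_group])
      (simp_all add: ladder_generators_def)
qed

lemma kernel_witness_in_ladder_group: "kernel_witness n \<in> carrier ladder_group"
  using ladder_generators_in_ladder_group lighter_e_in_ladder_group[of n]
  unfolding kernel_witness_def
  by (intro subgroup.m_closed[OF subgroup_ladder_group]) (simp_all add: ladder_generators_def)

lemma kernel_witness_apply:
  "kernel_witness n m = (lamp_diff (G m) (e m n) (\<lambda>h. h = \<one>\<^bsub>G m\<^esub>), \<one>\<^bsub>G m\<^esub>)"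
proof -
  interpret involution_ladder "G m" "a m" "e m"
    by (rule ladder)
  show ?thesis
    using lamplighter_lamp_diff[of n] by (simp add: kernel_witness_def lamp_ones_def lighter_e_def)
qed

lemma funpow_ladder_endo:
  "(ladder_endo ^^ n) p = (\<lambda>m. (lamplighter_map (G m) (a m) (e m 0) ^^ n) (p m))"
  by (induction n) (auto simp: ladder_endo_def)

lemma ladder_endo_hom_lamplighters: "ladder_endo \<in> hom lamplighters lamplighters"
proof -
  have hom: "lamplighter_map (G m) (a m) (e m 0) \<in> hom (lamplighter (G m)) (lamplighter (G m))" for m
    by (rule group.lamplighter_map_hom[OF group_G a_closed e_closed])
  show ?thesis
  proof (rule homI)
    fix p assume "p \<in> carrier lamplighters"
    then show "ladder_endo p \<in> carrier lamplighters"
      using hom by (auto simp: carrier_lamplighters_iff ladder_endo_def hom_def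
          simp del: carrier_product_group)
  next
    fix p q assume "p \<in> carrier lamplighters" "q \<in> carrier lamplighters"
    then show "ladder_endo (p \<cdot> q) = ladder_endo p \<cdot> ladder_endo q"
      using hom by (auto simp: carrier_lamplighters_iff ladder_endo_def hom_def fun_eq_iff
          simp del: carrier_product_group)
  qed
qed

lemma ladder_endo_lamp_ones:
  "ladder_endo lamp_ones =
     (inv\<^bsub>lamplighters\<^esub> lighter_a \<cdot> lamp_ones \<cdot> lighter_a) \<cdot>
     (inv\<^bsub>lamplighters\<^esub> (lighter_a \<cdot> lighter_e 0) \<cdot> lamp_ones \<cdot> (lighter_a \<cdot> lighter_e 0))"
proof
  fix m
  interpret involution_ladder "G m" "a m" "e m"
    by (rule ladder)
  have "lighter_a \<in> carrier lamplighters" "lighter_a \<cdot> lighter_e 0 \<in> carrier lamplighters"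
    using ladder_generators_closed monoid.m_closed[OF group.is_monoid[OF group_lamplighters]]
    by (simp_all add: ladder_generators_def)
  then show "ladder_endo lamp_ones m =
      ((inv\<^bsub>lamplighters\<^esub> lighter_a \<cdot> lamp_ones \<cdot> lighter_a) \<cdot>
       (inv\<^bsub>lamplighters\<^esub> (lighter_a \<cdot> lighter_e 0) \<cdot> lamp_ones \<cdot> (lighter_a \<cdot> lighter_e 0))) m"
    using lamplighter_map_lamp_one
    by (simp only: mult_lamplighters_apply inv_lamplighters_apply)
      (simp add: ladder_endo_def lighter_a_def lighter_e_def lamp_ones_def inv_lamplighter_lighter
        lamplighter_mult del: inv_product_group)
qed

lemma ladder_endo_ladder_generators:
  "ladder_endo ` ladder_generators \<subseteq> generate lamplighters ladder_generators"
proof -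
  have "ladder_endo lighter_a = lighter_a" "ladder_endo (lighter_e 0) = lighter_e 0"
    by (auto simp: ladder_endo_def lighter_a_def lighter_e_def lamplighter_map_def lamp_map_def fun_eq_iff)
  moreover have "ladder_endo lamp_ones \<in> carrier ladder_group"
    using ladder_generators_in_ladder_group lighter_e_in_ladder_group[of 0]
    unfolding ladder_endo_lamp_ones
    by (intro subgroup.m_closed[OF subgroup_ladder_group] subgroup.m_inv_closed[OF subgroup_ladder_group])
      (simp_all add: ladder_generators_def)
  ultimately show ?thesis
    using ladder_generators_in_ladder_group by (simp add: ladder_generators_def carrier_ladder_group)
qed

lemma ladder_endo_hom: "ladder_endo \<in> hom ladder_group ladder_group"
  unfolding ladder_group_def
  by (rule group.hom_subgroup_generated[OF group_lamplighters ladder_endo_hom_lamplighters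
        ladder_generators_closed ladder_endo_ladder_generators])

lemma one_ladder_group: "\<one>\<^bsub>ladder_group\<^esub> = (\<lambda>m. lighter (\<one>\<^bsub>G m\<^esub>))"
  by (simp add: ladder_group_def subgroup_generated_def lamplighter_one restrict_UNIV)

lemma ladder_endo_kills_kernel_witness:
  "(ladder_endo ^^ Suc n) (kernel_witness n) = \<one>\<^bsub>ladder_group\<^esub>"
proof
  fix m
  interpret involution_ladder "G m" "a m" "e m"
    by (rule ladder)
  show "(ladder_endo ^^ Suc n) (kernel_witness n) m = \<one>\<^bsub>ladder_group\<^esub> m"
    using funpow_ladder_map_lamp_diff_vanishes[of n]
    by (simp only: funpow_ladder_endo kernel_witness_apply funpow_lamplighter_map one_ladder_group)
qed

lemma ladder_endo_kernel_witness_nontrivial: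
  "(ladder_endo ^^ n) (kernel_witness n) \<noteq> \<one>\<^bsub>ladder_group\<^esub>"
proof
  assume "(ladder_endo ^^ n) (kernel_witness n) = \<one>\<^bsub>ladder_group\<^esub>"
  then have "(lamp_map (G m) (a m) (e m 0) ^^ n) (lamp_diff (G m) (e m n) (\<lambda>h. h = \<one>\<^bsub>G m\<^esub>)) =
      (\<lambda>h. False)" for m
    by (auto simp: funpow_ladder_endo kernel_witness_apply funpow_lamplighter_map one_ladder_group
        fun_eq_iff)
  with unbounded_depth[of n] show False
    by blast
qed

lemma group_ladder_group: "group ladder_group"
  by (simp add: ladder_group_def group.group_subgroup_generated[OF group_lamplighters])

lemma countable_ladder_group: "countable (carrier ladder_group)"
  unfolding carrier_ladder_group
  by (rule group.countable_generate[OF group_lamplighters ladder_generators_closed])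
    (simp add: ladder_generators_def)

lemma finitely_generated_ladder_group: "finitely_generated_group ladder_group"
  unfolding ladder_group_def
  by (rule group.finitely_generated_subgroup_generated[OF group_lamplighters _ ladder_generators_closed])
    (simp add: ladder_generators_def)

lemma residually_finite_ladder_group: "residually_finite ladder_group"
  unfolding ladder_group_def
  by (rule residually_finite_subgroup_generated_product)
    (simp_all add: group.group_lamplighter[OF group_G] finite_lamplighter[OF finite_carrier])

end

section \<open>Involution ladders in symmetric groups\<close>

definition half_rotation :: "nat \<Rightarrow> nat \<Rightarrow> nat" where
  "half_rotation m x =
     (if 1 \<le> x \<and> x \<le> 2 * m then (if x = 1 then m else if x = m + 1 then 2 * m else x - 1) else x)"

definition half_swap :: "nat \<Rightarrow> nat \<Rightarrow> nat \<Rightarrow> nat" where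
  "half_swap m k = transpose (k mod m + 1) (k mod m + 1 + m)"

lemma half_rotation_permutes: "half_rotation m permutes {1..2 * m}"
proof (rule bij_imp_permutes)
  have "inj_on (half_rotation m) {1..2 * m}"
    by (auto simp: inj_on_def half_rotation_def split: if_splits)
  moreover have "half_rotation m ` {1..2 * m} \<subseteq> {1..2 * m}"
    by (auto simp: half_rotation_def)
  ultimately show "bij_betw (half_rotation m) {1..2 * m} {1..2 * m}"
    by (simp add: bij_betw_def endo_inj_surj)
qed (auto simp: half_rotation_def)

lemma half_swap_permutes: "half_swap m k permutes {1..2 * m}"
proof (cases "m = 0")
  case False
  then have "k mod m < m"
    by simp
  then show ?thesis
    unfolding half_swap_def by (intro permutes_swap_id) auto
qed (simp add: half_swap_def)

lemma comp_transpose_eq: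
  assumes "inj f" "f x = x'" "f y = y'"
  shows "f \<circ> transpose x y = transpose x' y' \<circ> f"
proof
  fix z
  show "(f \<circ> transpose x y) z = (transpose x' y' \<circ> f) z"
    using assms by (cases "z = x \<or> z = y") (auto simp: transpose_def dest: injD)
qed

lemma half_rotation_half_swap_Suc:
  "half_rotation m \<circ> half_swap m (Suc k) = half_swap m k \<circ> half_rotation m"
proof (cases "m = 0")
  case False
  have "k mod m < m"
    using False by simp
  then have "half_rotation m (Suc k mod m + 1) = k mod m + 1"
    "half_rotation m (Suc k mod m + 1 + m) = k mod m + 1 + m"
    by (auto simp: half_rotation_def mod_Suc)
  then show ?thesis
    unfolding half_swap_def
    by (intro comp_transpose_eq permutes_inj[OF half_rotation_permutes])
qed (simp add: half_swap_def half_rotation_def fun_eq_iff)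

lemma half_swap_involution: "half_swap m k \<circ> half_swap m k = id"
  by (simp add: half_swap_def)

lemma half_swap_0_commute: "half_swap m 0 \<circ> half_swap m k = half_swap m k \<circ> half_swap m 0"
proof (cases "m = 0 \<or> k mod m = 0")
  case False
  then have "0 < k mod m" "k mod m < m"
    by auto
  then show ?thesis
    by (auto simp: half_swap_def fun_eq_iff transpose_def)
qed (auto simp: half_swap_def)

lemma involution_ladder_sym_group:
  "involution_ladder (sym_group (2 * m)) (half_rotation m) (half_swap m)"
  unfolding involution_ladder_def involution_ladder_axioms_def
  using half_rotation_permutes half_swap_permutes
  by (simp add: sym_group_is_group sym_group_carrier sym_group_mult sym_group_one
      half_rotation_half_swap_Suc half_swap_0_commute half_swap_involution)

text \<open>
  For a permutation p of {1..2m}, swaps_only m J p says that p is a product of half swaps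
  with indices in J.
\<close>

definition swap_pattern :: "nat \<Rightarrow> nat set \<Rightarrow> (nat \<Rightarrow> nat) \<Rightarrow> nat \<Rightarrow> bool" where
  "swap_pattern m J p i \<longleftrightarrow>
     p (i + 1) = i + 1 \<and> p (i + 1 + m) = i + 1 + m \<or>
     i \<in> J \<and> p (i + 1) = i + 1 + m \<and> p (i + 1 + m) = i + 1"

definition swaps_only :: "nat \<Rightarrow> nat set \<Rightarrow> (nat \<Rightarrow> nat) \<Rightarrow> bool" where
  "swaps_only m J p \<longleftrightarrow> (\<forall>i<m. swap_pattern m J p i)"

lemma swaps_only_id: "swaps_only m J id"
  by (simp add: swaps_only_def swap_pattern_def)

lemma swaps_only_empty_iff:
  assumes "p permutes {1..2 * m}"
  shows "swaps_only m {} p \<longleftrightarrow> p = id"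
proof
  assume fixed: "swaps_only m {} p"
  show "p = id"
  proof
    fix x
    show "p x = id x"
    proof (cases "1 \<le> x \<and> x \<le> 2 * m")
      case True
      show ?thesis
      proof (cases "x \<le> m")
        case True
        with \<open>1 \<le> x \<and> x \<le> 2 * m\<close> have "x - 1 < m" "x = (x - 1) + 1"
          by auto
        then show ?thesis
          using fixed by (auto simp: swaps_only_def swap_pattern_def)
      next
        case False
        with \<open>1 \<le> x \<and> x \<le> 2 * m\<close> have "x - 1 - m < m" "x = (x - 1 - m) + 1 + m"
          by auto
        then show ?thesis
          using fixed by (auto simp: swaps_only_def swap_pattern_def)
      qed
    qed (use assms in \<open>simp add: permutes_def\<close>)
  qed
qed (simp add: swaps_only_id)

lemma swaps_only_insert:
  assumes "n < m" "n \<notin> J"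
  shows "swaps_only m (insert n J) p \<longleftrightarrow>
           swaps_only m J p \<noteq> swaps_only m J (p \<circ> transpose (n + 1) (n + 1 + m))"
proof -
  let ?q = "p \<circ> transpose (n + 1) (n + 1 + m)"
  let ?rest = "\<forall>i<m. i \<noteq> n \<longrightarrow> swap_pattern m (insert n J) p i"
  have split: "swaps_only m K r \<longleftrightarrow> (\<forall>i<m. i \<noteq> n \<longrightarrow> swap_pattern m K r i) \<and> swap_pattern m K r n"
    for K r
    using assms(1) by (auto simp: swaps_only_def)
  have "swap_pattern m J p i = swap_pattern m (insert n J) p i"
    "swap_pattern m J ?q i = swap_pattern m (insert n J) p i" if "i < m" "i \<noteq> n" for i
    using that assms(1) by (auto simp: swap_pattern_def transpose_def)
  then have "(\<forall>i<m. i \<noteq> n \<longrightarrow> swap_pattern m J p i) \<longleftrightarrow> ?rest"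
    "(\<forall>i<m. i \<noteq> n \<longrightarrow> swap_pattern m J ?q i) \<longleftrightarrow> ?rest"
    by auto
  moreover have "swap_pattern m (insert n J) p n \<longleftrightarrow> swap_pattern m J p n \<noteq> swap_pattern m J ?q n"
  proof -
    have "swap_pattern m J ?q n \<longleftrightarrow> p (n + 1) = n + 1 + m \<and> p (n + 1 + m) = n + 1"
      using assms by (auto simp: swap_pattern_def)
    moreover have "n + 1 \<noteq> n + 1 + m"
      using assms(1) by simp
    ultimately show ?thesis
      using assms(2) by (auto simp: swap_pattern_def)
  qed
  ultimately show ?thesis
    unfolding split[of "insert n J"] split[of J] by blast
qed

lemma funpow_lamp_map_sym_group:
  assumes "k \<le> m"
  shows "(lamp_map (sym_group (2 * m)) (half_rotation m) (half_swap m 0) ^^ k) (\<lambda>h. h = id) =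
    (\<lambda>h. h \<in> carrier (sym_group (2 * m)) \<and>
         swaps_only m {0..<k} (h \<otimes>\<^bsub>sym_group (2 * m)\<^esub> half_rotation m [^]\<^bsub>sym_group (2 * m)\<^esub> k))"
  using assms
proof (induction k)
  case 0
  show ?case
  proof
    fix h
    show "(lamp_map (sym_group (2 * m)) (half_rotation m) (half_swap m 0) ^^ 0) (\<lambda>h. h = id) h =
        (h \<in> carrier (sym_group (2 * m)) \<and>
         swaps_only m {0..<0} (h \<otimes>\<^bsub>sym_group (2 * m)\<^esub> half_rotation m [^]\<^bsub>sym_group (2 * m)\<^esub> (0::nat)))"
      by (cases "h \<in> carrier (sym_group (2 * m))")
        (auto simp: sym_group_carrier sym_group_mult sym_group_one permutes_id swaps_only_empty_iff)
  qed
next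
  case (Suc k)
  interpret involution_ladder "sym_group (2 * m)" "half_rotation m" "half_swap m"
    by (rule involution_ladder_sym_group)
  have "k < m"
    using Suc.prems by simp
  have "{0..<Suc k} = insert k {0..<k}"
    by auto
  then have "swaps_only m {0..<Suc k} y \<longleftrightarrow>
      swaps_only m {0..<k} y \<noteq> swaps_only m {0..<k} (y \<otimes>\<^bsub>sym_group (2 * m)\<^esub> half_swap m k)" for y
    using swaps_only_insert[OF \<open>k < m\<close>, of "{0..<k}" y] \<open>k < m\<close>
    by (simp add: sym_group_mult half_swap_def)
  then show ?case
    using Suc by (simp add: ladder_map_translate_pow del: nat_pow_Suc)
qed

lemma lamp_map_sym_group_depth:
  assumes "n < m"
  shows "(lamp_map (sym_group (2 * m)) (half_rotation m) (half_swap m 0) ^^ n)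
           (lamp_diff (sym_group (2 * m)) (half_swap m n) (\<lambda>h. h = id)) \<noteq> (\<lambda>h. False)"
proof -
  interpret involution_ladder "sym_group (2 * m)" "half_rotation m" "half_swap m"
    by (rule involution_ladder_sym_group)
  let ?a = "half_rotation m [^]\<^bsub>sym_group (2 * m)\<^esub> n"
  let ?h = "inv\<^bsub>sym_group (2 * m)\<^esub> ?a"
  have h_closed: "?h \<in> carrier (sym_group (2 * m))"
    by (simp del: sym_group_inv_equality)
  have "?h \<otimes>\<^bsub>sym_group (2 * m)\<^esub> ?a = id"
    by (simp add: sym_group_one del: sym_group_inv_equality)
  moreover have "?h \<otimes>\<^bsub>sym_group (2 * m)\<^esub> half_swap m 0 \<otimes>\<^bsub>sym_group (2 * m)\<^esub> ?a = half_swap m n"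
    by (simp add: m_assoc e_0_pow m_assoc[symmetric] del: sym_group_inv_equality)
  moreover have "\<not> swaps_only m {0..<n} (half_swap m n)"
    using assms by (auto simp: swaps_only_def swap_pattern_def half_swap_def)
  ultimately have "lamp_diff (sym_group (2 * m)) (half_swap m 0)
      ((lamp_map (sym_group (2 * m)) (half_rotation m) (half_swap m 0) ^^ n) (\<lambda>h. h = id)) ?h"
    using h_closed funpow_lamp_map_sym_group[of n m] assms
    by (simp add: lamp_diff_def swaps_only_id del: sym_group_inv_equality)
  then show ?thesis
    using funpow_ladder_map_lamp_diff[of n 0] by (auto simp: sym_group_one)
qed

lemma ladder_family_sym_group:
  "ladder_family (\<lambda>m. sym_group (2 * m)) half_rotation half_swap"
proof (rule ladder_family.intro)
  show "involution_ladder (sym_group (2 * m)) (half_rotation m) (half_swap m)" for m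
    by (rule involution_ladder_sym_group)
  show "finite (carrier (sym_group (2 * m)))" for m
    by (simp add: sym_group_def finite_permutations)
  show "\<exists>m. (lamp_map (sym_group (2 * m)) (half_rotation m) (half_swap m 0) ^^ n)
              (lamp_diff (sym_group (2 * m)) (half_swap m n) (\<lambda>h. h = \<one>\<^bsub>sym_group (2 * m)\<^esub>)) \<noteq> (\<lambda>h. False)"
    for n
    using lamp_map_sym_group_depth[of n "Suc n"] unfolding sym_group_one by blast
qed

theorem theorem2:
  shows "\<exists>(G :: nat monoid) (\<Phi> :: nat \<Rightarrow> nat).
           group G \<and> finitely_generated_group G \<and> residually_finite G \<and>
           \<Phi> \<in> hom G G \<and>
           (\<forall>n::nat. \<not> inj_on \<Phi> ((\<Phi> ^^ n) ` carrier G))"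
proof -
  interpret ladder_family "\<lambda>m. sym_group (2 * m)" half_rotation half_swap
    by (rule ladder_family_sym_group)
  obtain G :: "nat monoid" and \<phi> where G: "group G" and \<phi>: "\<phi> \<in> iso ladder_group G"
    using countable_group_iso_nat[OF group_ladder_group countable_ladder_group] .
  let ?\<Psi> = "\<phi> \<circ> ladder_endo \<circ> inv_into (carrier ladder_group) \<phi>"
  have "?\<Psi> \<in> hom G G"
    by (rule conjugate_hom_iso[OF group_ladder_group \<phi> ladder_endo_hom])
  moreover have "\<not> inj_on ?\<Psi> ((?\<Psi> ^^ n) ` carrier G)" for n
    by (rule not_inj_on_funpow_image_conjugate[OF group_ladder_group G \<phi> ladder_endo_hom
          kernel_witness_in_ladder_group ladder_endo_kernel_witness_nontrivial
          ladder_endo_kills_kernel_witness])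
  moreover have "finitely_generated_group G" "residually_finite G"
    using finitely_generated_group_iso[OF group_ladder_group G \<phi> finitely_generated_ladder_group]
      residually_finite_iso[OF group_ladder_group G \<phi> residually_finite_ladder_group] .
  ultimately show ?thesis
    using G by blast
qed

end
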